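(* For every graph $G$ with $\chi(G)>3$, $W(G)>\frac{1}{16}\,g(G)$.
   Context: $\chi(G)$ is the chromatic number and $g(G)$ the girth (minimum length of a cycle) of $G$; $K_3$ is the complete graph on 3 vertices. Graphs are viewed as structures with adjacency relation $E$ and equality. For a graph $G$ with $\chi(G)>3$, $W(G)$ is the least $k$ such that some existential-positive first-order sentence (built from atomic formulas $x=y$, $E(x,y)$ using only $\wedge$, $\vee$ and $\exists$) in which at most $k$ distinct variables occur is true in $G$ and false in $K_3$. Equivalently, $W(G)$ is the least $k$ such that for some $r$ Spoiler has a winning strategy in the $r$-round $k$-width 3-coloring game on $G$: in each round Spoiler may erase the colors of some colored vertices and then selects a vertex, which Duplicator colors red, blue or green; at most $k$ vertices may be colored after each round; Duplicator wins if after every round the partial coloring is proper. *)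

theory Defs
  imports Complex_Main
begin

definition graph :: "'a set \<Rightarrow> ('a \<Rightarrow> 'a \<Rightarrow> bool) \<Rightarrow> bool" where
  "graph V E \<longleftrightarrow> finite V \<and> (\<forall>u v. E u v \<longrightarrow> u \<in> V \<and> v \<in> V)
     \<and> (\<forall>u v. E u v \<longrightarrow> E v u) \<and> (\<forall>v. \<not> E v v)"

definition chromatic_number :: "'a set \<Rightarrow> ('a \<Rightarrow> 'a \<Rightarrow> bool) \<Rightarrow> nat" where
  "chromatic_number V E = (LEAST k. \<exists>f. (\<forall>v\<in>V. f v < k) \<and>
       (\<forall>u\<in>V. \<forall>v\<in>V. E u v \<longrightarrow> f u \<noteq> f v))"

definition is_cycle :: "'a set \<Rightarrow> ('a \<Rightarrow> 'a \<Rightarrow> bool) \<Rightarrow> 'a list \<Rightarrow> bool" where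
  "is_cycle V E cs \<longleftrightarrow> length cs \<ge> 3 \<and> distinct cs \<and> set cs \<subseteq> V \<and>
     (\<forall>i < length cs. E (cs ! i) (cs ! ((i + 1) mod length cs)))"

definition girth :: "'a set \<Rightarrow> ('a \<Rightarrow> 'a \<Rightarrow> bool) \<Rightarrow> nat" where
  "girth V E = (LEAST n. \<exists>cs. is_cycle V E cs \<and> length cs = n)"

definition proper_partial :: "('a \<Rightarrow> 'a \<Rightarrow> bool) \<Rightarrow> ('a \<Rightarrow> nat option) \<Rightarrow> bool" where
  "proper_partial E p \<longleftrightarrow> (\<forall>u\<in>dom p. \<forall>v\<in>dom p. E u v \<longrightarrow> p u \<noteq> p v)"

text \<open>spoiler_wins V E k r p: from position p (current partial colouring), Spoiler
  can force a non-proper colouring within r rounds of the k-width 3-colouring game.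
  In each round Spoiler erases a set S of coloured vertices, then selects a vertex v;
  at most k vertices may be coloured afterwards; Duplicator colours v with 0, 1 or 2.\<close>
fun spoiler_wins :: "'a set \<Rightarrow> ('a \<Rightarrow> 'a \<Rightarrow> bool) \<Rightarrow> nat \<Rightarrow> nat \<Rightarrow> ('a \<Rightarrow> nat option) \<Rightarrow> bool" where
  "spoiler_wins V E k 0 p = False"
| "spoiler_wins V E k (Suc r) p =
     (\<exists>S v. S \<subseteq> dom p \<and> v \<in> V \<and> card (insert v (dom p - S)) \<le> k \<and>
        (\<forall>c \<in> {0, 1, 2::nat}.
           \<not> proper_partial E ((p |` (- S))(v \<mapsto> c)) \<or>
           spoiler_wins V E k r ((p |` (- S))(v \<mapsto> c))))"

definition W :: "'a set \<Rightarrow> ('a \<Rightarrow> 'a \<Rightarrow> bool) \<Rightarrow> nat" where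
  "W V E = (LEAST k. \<exists>r. spoiler_wins V E k r Map.empty)"

end

theory Submission
  imports Defs
begin

text \<open>
  Duplicator keeps the current partial colouring h (at most k vertices) extendable to a proper
  3-colouring of every set obtained from its domain by adding at most 2k vertices. Suppose that
  Spoiler selects v and each of the three colours for v breaks this invariant. The three witness
  sets span at most 7k vertices, so when 7k < g(G) their union induces a forest. In a forest a
  precoloured set D extends as soon as every subforest of at most 3|D| vertices containing D does:
  uncoloured vertices of degree at most 2 can be peeled off, and once there are none the degree
  sum of a forest leaves at most 3|D| vertices. Hence h extends to the union, and the colour this
  extension gives to v contradicts the witness for that colour. So g(G) \<le> 7 W(G).
\<close>

lemma graphD:
  assumes "graph V E"
  shows "finite V" and "E u v \<Longrightarrow> E v u" and "\<not> E v v"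
  using assms unfolding graph_def by auto

lemma chromatic_number_le:
  assumes "\<forall>v\<in>V. f v < k" and "\<forall>u\<in>V. \<forall>v\<in>V. E u v \<longrightarrow> f u \<noteq> f v"
  shows "chromatic_number V E \<le> k"
  unfolding chromatic_number_def by (rule Least_le) (use assms in blast)

lemma chromatic_number_le_if_proper_partial:
  assumes proper: "proper_partial E q" and "dom q = V" and "ran q \<subseteq> {..<k}"
  shows "chromatic_number V E \<le> k"
proof (rule chromatic_number_le[of _ "\<lambda>x. the (q x)"])
  have q_value: "q x = Some (the (q x))" "the (q x) < k" if "x \<in> V" for x
    using that assms(2,3) by (auto simp: ran_def)
  show "\<forall>x\<in>V. the (q x) < k" using q_value(2) by blast
  show "\<forall>x\<in>V. \<forall>y\<in>V. E x y \<longrightarrow> the (q x) \<noteq> the (q y)"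
    using proper q_value(1) \<open>dom q = V\<close> unfolding proper_partial_def by metis
qed

subsection \<open>Forests\<close>

definition cycle_free :: "'a set \<Rightarrow> ('a \<Rightarrow> 'a \<Rightarrow> bool) \<Rightarrow> 'a set \<Rightarrow> bool" where
  "cycle_free V E Y \<longleftrightarrow> (\<forall>cs. is_cycle V E cs \<longrightarrow> \<not> set cs \<subseteq> Y)"

abbreviation degree_in :: "('a \<Rightarrow> 'a \<Rightarrow> bool) \<Rightarrow> 'a set \<Rightarrow> 'a \<Rightarrow> nat" where
  "degree_in E Y x \<equiv> card {y\<in>Y. E x y}"

lemma cycle_free_subset: "cycle_free V E Y \<Longrightarrow> Z \<subseteq> Y \<Longrightarrow> cycle_free V E Z"
  unfolding cycle_free_def by blast

lemma cycle_free_if_card_less_girth: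
  assumes "finite Y" and "card Y < girth V E"
  shows "cycle_free V E Y"
  unfolding cycle_free_def
proof (intro allI impI notI)
  fix cs assume cycle: "is_cycle V E cs" and "set cs \<subseteq> Y"
  then have "card (set cs) \<le> card Y" using assms(1) card_mono by blast
  moreover have "girth V E \<le> length cs" unfolding girth_def by (rule Least_le) (use cycle in blast)
  moreover have "length cs = card (set cs)"
    using cycle unfolding is_cycle_def by (simp add: distinct_card)
  ultimately show False using assms(2) by simp
qed

lemma is_cycle_take:
  assumes "distinct ps" and "set ps \<subseteq> V" and path: "\<And>j. Suc j < length ps \<Longrightarrow> E (ps!j) (ps!Suc j)"
    and "2 \<le> i" and "i < length ps" and closing: "E (ps!i) (ps!0)"
  shows "is_cycle V E (take (Suc i) ps)"
  unfolding is_cycle_def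
proof (intro conjI allI impI)
  let ?cs = "take (Suc i) ps"
  have len: "length ?cs = Suc i" using \<open>i < length ps\<close> by simp
  then show "3 \<le> length ?cs" using \<open>2 \<le> i\<close> by simp
  show "distinct ?cs" using assms(1) by simp
  show "set ?cs \<subseteq> V" using assms(2) set_take_subset by (metis order_trans)
  fix j assume "j < length ?cs"
  then consider "j = i" | "j < i" using len by linarith
  then show "E (?cs ! j) (?cs ! ((j + 1) mod length ?cs))"
  proof cases
    case 1
    then show ?thesis using len closing by simp
  next
    case 2
    then show ?thesis using len path \<open>i < length ps\<close> by simp
  qed
qed

text \<open>A longest path in Y starting at x cannot be prolonged, so a second neighbour of x closes a cycle.\<close>
lemma cycle_free_has_leaf:
  assumes G: "graph V E" and Y: "finite Y" "Y \<subseteq> V" "Y \<noteq> {}" and acyclic: "cycle_free V E Y"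
  shows "\<exists>x\<in>Y. degree_in E Y x \<le> 1"
proof (rule ccontr)
  assume "\<not> ?thesis"
  then have deg: "\<And>x. x \<in> Y \<Longrightarrow> 2 \<le> degree_in E Y x" by force
  define path where "path ps \<longleftrightarrow> ps \<noteq> [] \<and> distinct ps \<and> set ps \<subseteq> Y \<and>
      (\<forall>j. Suc j < length ps \<longrightarrow> E (ps!j) (ps!Suc j))" for ps
  obtain y0 where "y0 \<in> Y" using Y(3) by blast
  then have "path [y0]" unfolding path_def by simp
  moreover have "length ps < Suc (card Y)" if "path ps" for ps
    using that Y(1) card_mono distinct_card unfolding path_def by (metis le_imp_less_Suc)
  ultimately obtain ps where ps: "path ps" and longest: "\<And>qs. path qs \<Longrightarrow> length qs \<le> length ps"
    using ex_has_greatest_nat[of path] by metis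
  define x where "x = ps ! 0"
  have "x \<in> Y" using ps unfolding path_def x_def by (simp add: subset_iff)
  have "\<not> {y\<in>Y. E x y} \<subseteq> {ps ! 1}"
  proof
    assume "{y\<in>Y. E x y} \<subseteq> {ps ! 1}"
    then have "degree_in E Y x \<le> card {ps ! 1}" by (intro card_mono) auto
    then show False using deg[OF \<open>x \<in> Y\<close>] by simp
  qed
  then obtain y where "y \<in> Y" and "E x y" and "y \<noteq> ps ! 1" by blast
  show False
  proof (cases "y \<in> set ps")
    case False
    have "path (y # ps)"
      using ps False \<open>y \<in> Y\<close> graphD(2)[OF G \<open>E x y\<close>]
      unfolding path_def x_def by (auto simp: nth_Cons split: nat.split)
    then show False using longest by fastforce
  next
    case True
    then obtain i where "i < length ps" and "ps ! i = y" by (metis in_set_conv_nth)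
    moreover have "i \<noteq> 0" using \<open>E x y\<close> graphD(3)[OF G, of x] \<open>ps ! i = y\<close> x_def by (cases i) auto
    moreover have "i \<noteq> 1" using \<open>y \<noteq> ps ! 1\<close> \<open>ps ! i = y\<close> by blast
    ultimately have "is_cycle V E (take (Suc i) ps)"
      using ps Y(2) graphD(2)[OF G \<open>E x y\<close>] unfolding path_def x_def
      by (intro is_cycle_take) auto
    moreover have "set (take (Suc i) ps) \<subseteq> Y"
      using ps set_take_subset unfolding path_def by fastforce
    ultimately show False using acyclic unfolding cycle_free_def by blast
  qed
qed

lemma degree_sum_remove:
  assumes G: "graph V E" and "finite Y" and "x \<in> Y"
  shows "(\<Sum>z\<in>Y. degree_in E Y z)
    = 2 * degree_in E Y x + (\<Sum>z\<in>Y - {x}. degree_in E (Y - {x}) z)"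
proof -
  let ?Y' = "Y - {x}"
  have split: "degree_in E Y z = degree_in E ?Y' z + (if E z x then 1 else 0)" for z
  proof -
    have "{y\<in>Y. E z y} = {y\<in>?Y'. E z y} \<union> (if E z x then {x} else {})"
      using \<open>x \<in> Y\<close> by auto
    then show ?thesis using \<open>finite Y\<close> by simp
  qed
  have "(\<Sum>z\<in>Y. degree_in E Y z) = degree_in E Y x + (\<Sum>z\<in>?Y'. degree_in E Y z)"
    using assms(2,3) by (simp add: sum.remove)
  also have "(\<Sum>z\<in>?Y'. degree_in E Y z)
      = (\<Sum>z\<in>?Y'. degree_in E ?Y' z) + (\<Sum>z\<in>?Y'. if E z x then 1 else 0)"
    by (simp add: split sum.distrib)
  also have "(\<Sum>z\<in>?Y'. if E z x then 1 else 0) = card {z\<in>?Y'. E z x}"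
    using assms(2) by (simp add: sum.inter_filter[symmetric])
  also have "{z\<in>?Y'. E z x} = {y\<in>Y. E x y}"
    using graphD(2,3)[OF G] by blast
  finally show ?thesis by simp
qed

lemma cycle_free_degree_sum:
  assumes G: "graph V E"
  shows "finite Y \<Longrightarrow> Y \<subseteq> V \<Longrightarrow> Y \<noteq> {} \<Longrightarrow> cycle_free V E Y \<Longrightarrow>
    (\<Sum>x\<in>Y. degree_in E Y x) + 2 \<le> 2 * card Y"
proof (induction "card Y" arbitrary: Y rule: less_induct)
  case less
  obtain x where "x \<in> Y" and leaf: "degree_in E Y x \<le> 1"
    using cycle_free_has_leaf[OF G less.prems] by blast
  show ?case
  proof (cases "Y = {x}")
    case True
    then show ?thesis using graphD(3)[OF G] by simp
  next
    case False
    let ?Y' = "Y - {x}"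
    have card: "card Y = Suc (card ?Y')" using \<open>x \<in> Y\<close> less.prems(1) by (metis card_Suc_Diff1)
    have "(\<Sum>z\<in>?Y'. degree_in E ?Y' z) + 2 \<le> 2 * card ?Y'"
      by (rule less.hyps)
        (use less.prems False card \<open>x \<in> Y\<close> cycle_free_subset[OF less.prems(4), of ?Y'] in auto)
    then show ?thesis using degree_sum_remove[OF G less.prems(1) \<open>x \<in> Y\<close>] leaf card by simp
  qed
qed

lemma cycle_free_card_le_if_degree_ge_3:
  assumes G: "graph V E" and Y: "finite Y" "Y \<subseteq> V" "cycle_free V E Y" and "D \<subseteq> Y"
    and deg: "\<And>x. x \<in> Y - D \<Longrightarrow> 3 \<le> degree_in E Y x"
  shows "card Y \<le> 3 * card D"
proof (cases "Y = {}")
  case False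
  have "3 * card (Y - D) = (\<Sum>x\<in>Y - D. 3)" by simp
  also have "\<dots> \<le> (\<Sum>x\<in>Y - D. degree_in E Y x)" using deg by (intro sum_mono) auto
  also have "\<dots> \<le> (\<Sum>x\<in>Y. degree_in E Y x)" using Y(1) by (intro sum_mono2) auto
  finally have "3 * card (Y - D) + 2 \<le> 2 * card Y"
    using cycle_free_degree_sum[OF G Y(1,2) False Y(3)] by simp
  moreover have "card (Y - D) = card Y - card D"
    using Y(1) \<open>D \<subseteq> Y\<close> by (meson card_Diff_subset finite_subset)
  moreover have "card D \<le> card Y" using Y(1) \<open>D \<subseteq> Y\<close> by (rule card_mono)
  ultimately show ?thesis by linarith
qed simp

subsection \<open>Extending partial 3-colourings\<close>

definition has_3col_extension :: "('a \<Rightarrow> 'a \<Rightarrow> bool) \<Rightarrow> 'a set \<Rightarrow> ('a \<Rightarrow> nat option) \<Rightarrow> bool" where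
  "has_3col_extension E X h \<longleftrightarrow> (\<exists>\<chi>. (\<forall>x\<in>X. \<chi> x < 3) \<and> (\<forall>x\<in>X. \<forall>y\<in>X. E x y \<longrightarrow> \<chi> x \<noteq> \<chi> y)
     \<and> (\<forall>x\<in>dom h. h x = Some (\<chi> x)))"

lemma has_3col_extension_mono:
  assumes "has_3col_extension E Y h" and "X \<subseteq> Y" and "g \<subseteq>\<^sub>m h"
  shows "has_3col_extension E X g"
proof -
  obtain \<chi> where range: "\<forall>x\<in>Y. \<chi> x < 3" and proper: "\<forall>x\<in>Y. \<forall>y\<in>Y. E x y \<longrightarrow> \<chi> x \<noteq> \<chi> y"
    and agree: "\<forall>x\<in>dom h. h x = Some (\<chi> x)"
    using assms(1) unfolding has_3col_extension_def by blast
  have "\<forall>x\<in>dom g. g x = Some (\<chi> x)"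
    using assms(3) agree unfolding map_le_def by (metis domIff)
  then show ?thesis
    using range proper assms(2) unfolding has_3col_extension_def by blast
qed

lemma has_3col_extension_insert:
  assumes G: "graph V E" and "finite Y" and "x \<notin> dom h" and deg: "degree_in E Y x \<le> 2"
    and "has_3col_extension E Y h"
  shows "has_3col_extension E (insert x Y) h"
proof -
  obtain \<chi> where range: "\<forall>y\<in>Y. \<chi> y < 3" and proper: "\<forall>y\<in>Y. \<forall>z\<in>Y. E y z \<longrightarrow> \<chi> y \<noteq> \<chi> z"
    and agree: "\<forall>y\<in>dom h. h y = Some (\<chi> y)"
    using assms(5) unfolding has_3col_extension_def by blast
  have "card (\<chi> ` {y\<in>Y. E x y}) \<le> 2"
    using deg card_image_le[of "{y\<in>Y. E x y}" \<chi>] \<open>finite Y\<close> by simp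
  moreover have "finite (\<chi> ` {y\<in>Y. E x y})" using \<open>finite Y\<close> by simp
  ultimately have "\<not> {..<3} \<subseteq> \<chi> ` {y\<in>Y. E x y}"
    using card_mono[of "\<chi> ` {y\<in>Y. E x y}" "{..<3::nat}"] by auto
  then obtain c where "c < 3" and free: "\<And>w. w \<in> Y \<Longrightarrow> E x w \<Longrightarrow> \<chi> w \<noteq> c" by blast
  show ?thesis unfolding has_3col_extension_def
  proof (intro exI[of _ "\<chi>(x := c)"] conjI ballI impI)
    fix y assume "y \<in> insert x Y"
    then show "(\<chi>(x := c)) y < 3" using range \<open>c < 3\<close> by auto
  next
    fix u w assume u: "u \<in> insert x Y" and w: "w \<in> insert x Y" and "E u w"
    have "u \<noteq> w" using \<open>E u w\<close> graphD(3)[OF G] by blast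
    consider "u = x" | "w = x" | "u \<noteq> x" "w \<noteq> x" by blast
    then show "(\<chi>(x := c)) u \<noteq> (\<chi>(x := c)) w"
    proof cases
      case 1
      then show ?thesis using free[of w] w \<open>E u w\<close> \<open>u \<noteq> w\<close> by auto
    next
      case 2
      then show ?thesis using free[of u] u graphD(2)[OF G \<open>E u w\<close>] \<open>u \<noteq> w\<close> by auto
    next
      case 3
      then show ?thesis using proper u w \<open>E u w\<close> by auto
    qed
  next
    fix y assume "y \<in> dom h"
    then show "h y = Some ((\<chi>(x := c)) y)" using agree \<open>x \<notin> dom h\<close> by auto
  qed
qed

lemma has_3col_extension_cycle_free:
  assumes G: "graph V E"
  shows "finite Y \<Longrightarrow> Y \<subseteq> V \<Longrightarrow> dom h \<subseteq> Y \<Longrightarrow> cycle_free V E Y \<Longrightarrow>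
    (\<And>Z. dom h \<subseteq> Z \<Longrightarrow> Z \<subseteq> Y \<Longrightarrow> card Z \<le> 3 * card (dom h) \<Longrightarrow> has_3col_extension E Z h) \<Longrightarrow>
    has_3col_extension E Y h"
proof (induction "card Y" arbitrary: Y rule: less_induct)
  case less
  show ?case
  proof (cases "\<exists>x\<in>Y - dom h. degree_in E Y x \<le> 2")
    case True
    then obtain x where "x \<in> Y" "x \<notin> dom h" and deg: "degree_in E Y x \<le> 2" by blast
    let ?Y' = "Y - {x}"
    have "card ?Y' < card Y" using \<open>x \<in> Y\<close> less.prems(1) by (metis card_Diff1_less)
    then have ext: "has_3col_extension E ?Y' h"
    proof (rule less.hyps)
      show "finite ?Y'" "?Y' \<subseteq> V" "dom h \<subseteq> ?Y'"
        using less.prems(1-3) \<open>x \<notin> dom h\<close> by auto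
      show "cycle_free V E ?Y'" using cycle_free_subset[OF less.prems(4)] by blast
      show "has_3col_extension E Z h" if "dom h \<subseteq> Z" "Z \<subseteq> ?Y'" "card Z \<le> 3 * card (dom h)" for Z
        using less.prems(5) that by blast
    qed
    have "finite {y\<in>Y. E x y}" using less.prems(1) by simp
    then have "degree_in E ?Y' x \<le> degree_in E Y x" by (rule card_mono) blast
    then have "has_3col_extension E (insert x ?Y') h"
      using has_3col_extension_insert[OF G _ \<open>x \<notin> dom h\<close> _ ext] less.prems(1) deg by simp
    moreover have "insert x ?Y' = Y" using \<open>x \<in> Y\<close> by blast
    ultimately show ?thesis by simp
  next
    case False
    then have "\<And>x. x \<in> Y - dom h \<Longrightarrow> 3 \<le> degree_in E Y x" by force
    then have "card Y \<le> 3 * card (dom h)"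
      using cycle_free_card_le_if_degree_ge_3[OF G less.prems(1,2,4,3)] by blast
    then show ?thesis using less.prems(3,5) by blast
  qed
qed

subsection \<open>Duplicator's invariant\<close>

definition safe_position :: "'a set \<Rightarrow> ('a \<Rightarrow> 'a \<Rightarrow> bool) \<Rightarrow> nat \<Rightarrow> ('a \<Rightarrow> nat option) \<Rightarrow> bool" where
  "safe_position V E k h \<longleftrightarrow> dom h \<subseteq> V \<and> card (dom h) \<le> k \<and>
     (\<forall>X. dom h \<subseteq> X \<and> X \<subseteq> V \<and> card (X - dom h) \<le> 2 * k \<longrightarrow> has_3col_extension E X h)"

lemma safe_position_proper:
  assumes "safe_position V E k h"
  shows "proper_partial E h"
proof -
  have "has_3col_extension E (dom h) h" using assms unfolding safe_position_def by auto
  then obtain \<chi> where proper: "\<forall>x\<in>dom h. \<forall>y\<in>dom h. E x y \<longrightarrow> \<chi> x \<noteq> \<chi> y"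
    and agree: "\<forall>x\<in>dom h. h x = Some (\<chi> x)"
    unfolding has_3col_extension_def by blast
  then show ?thesis unfolding proper_partial_def by (metis option.inject)
qed

lemma safe_position_restrict:
  assumes G: "graph V E" and safe: "safe_position V E k h"
  shows "safe_position V E k (h |` A)"
proof -
  have dom: "dom h \<subseteq> V" "card (dom h) \<le> k" using safe unfolding safe_position_def by auto
  have "has_3col_extension E X (h |` A)"
    if "dom h \<inter> A \<subseteq> X" "X \<subseteq> V" "card (X - dom h \<inter> A) \<le> 2 * k" for X
  proof -
    have "finite (X - dom h \<inter> A)" using \<open>X \<subseteq> V\<close> graphD(1)[OF G] finite_subset by blast
    then have "card (X \<union> dom h - dom h) \<le> card (X - dom h \<inter> A)" by (rule card_mono) blast
    then have "has_3col_extension E (X \<union> dom h) h"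
      using safe that dom unfolding safe_position_def by auto
    then show ?thesis by (rule has_3col_extension_mono) (auto simp: map_le_def)
  qed
  moreover have "card (dom h \<inter> A) \<le> k"
    using dom graphD(1)[OF G] by (meson Int_lower1 card_mono finite_subset le_trans)
  ultimately show ?thesis using dom unfolding safe_position_def by auto
qed

lemma safe_position_extends_below_girth:
  assumes G: "graph V E" and safe: "safe_position V E k h"
    and "Y \<subseteq> V" and "dom h \<subseteq> Y" and "card Y < girth V E"
  shows "has_3col_extension E Y h"
proof -
  have "finite Y" using assms(3) graphD(1)[OF G] by (rule finite_subset)
  show ?thesis
  proof (rule has_3col_extension_cycle_free[OF G \<open>finite Y\<close> assms(3,4)])
    show "cycle_free V E Y" using \<open>finite Y\<close> assms(5) by (rule cycle_free_if_card_less_girth)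
    fix Z assume Z: "dom h \<subseteq> Z" "Z \<subseteq> Y" "card Z \<le> 3 * card (dom h)"
    have "finite (dom h)" using assms(4) \<open>finite Y\<close> by (rule finite_subset)
    then have "card (Z - dom h) = card Z - card (dom h)" using Z(1) by (rule card_Diff_subset)
    also have "\<dots> \<le> 2 * k" using Z(3) safe unfolding safe_position_def by linarith
    finally show "has_3col_extension E Z h" using safe Z assms(3) unfolding safe_position_def by auto
  qed
qed

lemma safe_position_upd:
  assumes G: "graph V E" and safe: "safe_position V E k h" and "v \<in> V"
    and card_I: "card (insert v (dom h)) \<le> k" and girth: "7 * k < girth V E"
  shows "\<exists>c\<in>{0,1,2}. safe_position V E k (h(v \<mapsto> c))"
proof (rule ccontr)
  let ?I = "insert v (dom h)"
  assume "\<not> ?thesis"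
  then have "\<forall>c\<in>{0,1,2::nat}. \<exists>X. ?I \<subseteq> X \<and> X \<subseteq> V \<and> card (X - ?I) \<le> 2 * k
      \<and> \<not> has_3col_extension E X (h(v \<mapsto> c))"
    using safe \<open>v \<in> V\<close> card_I unfolding safe_position_def by auto
  then obtain X where X: "\<And>c. c \<in> {0,1,2} \<Longrightarrow> ?I \<subseteq> X c \<and> X c \<subseteq> V \<and> card (X c - ?I) \<le> 2 * k
      \<and> \<not> has_3col_extension E (X c) (h(v \<mapsto> c))"
    by metis
  define Y where "Y = ?I \<union> (\<Union>c\<in>{0,1,2::nat}. X c - ?I)"
  have "Y \<subseteq> V" using X \<open>v \<in> V\<close> safe unfolding Y_def safe_position_def by auto
  have "card Y \<le> card ?I + card (\<Union>c\<in>{0,1,2::nat}. X c - ?I)"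
    unfolding Y_def by (rule card_Un_le)
  also have "\<dots> \<le> k + (\<Sum>c\<in>{0,1,2::nat}. card (X c - ?I))"
    using card_I card_UN_le[of "{0,1,2::nat}" "\<lambda>c. X c - ?I"] by (intro add_mono) simp_all
  also have "\<dots> \<le> k + card {0,1,2::nat} * (2 * k)"
    using sum_bounded_above[of "{0,1,2::nat}" "\<lambda>c. card (X c - ?I)" "2 * k"] X by (intro add_mono) auto
  also have "\<dots> = 7 * k" by simp
  finally have "card Y < girth V E" using girth by linarith
  then have "has_3col_extension E Y h"
    using safe_position_extends_below_girth[OF G safe \<open>Y \<subseteq> V\<close>] unfolding Y_def by blast
  then obtain \<chi> where range: "\<forall>x\<in>Y. \<chi> x < 3" and proper: "\<forall>x\<in>Y. \<forall>y\<in>Y. E x y \<longrightarrow> \<chi> x \<noteq> \<chi> y"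
    and agree: "\<forall>x\<in>dom h. h x = Some (\<chi> x)"
    unfolding has_3col_extension_def by blast
  define c where "c = \<chi> v"
  have c: "c \<in> {0,1,2}" using range unfolding Y_def c_def by auto
  then have "X c \<subseteq> Y" unfolding Y_def by blast
  have "has_3col_extension E (X c) (h(v \<mapsto> c))"
    unfolding has_3col_extension_def
  proof (intro exI[of _ \<chi>] conjI)
    show "\<forall>x\<in>X c. \<chi> x < 3" "\<forall>x\<in>X c. \<forall>y\<in>X c. E x y \<longrightarrow> \<chi> x \<noteq> \<chi> y"
      using range proper \<open>X c \<subseteq> Y\<close> by blast+
    show "\<forall>x\<in>dom (h(v \<mapsto> c)). (h(v \<mapsto> c)) x = Some (\<chi> x)" using agree c_def by auto
  qed
  then show False using X[OF c] by blast
qed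

lemma safe_position_empty:
  assumes G: "graph V E" and "2 * k < girth V E"
  shows "safe_position V E k Map.empty"
  unfolding safe_position_def
proof (intro conjI allI impI)
  fix X assume X: "dom Map.empty \<subseteq> X \<and> X \<subseteq> V \<and> card (X - dom Map.empty) \<le> 2 * k"
  then have "finite X" using graphD(1)[OF G] finite_subset by blast
  show "has_3col_extension E X Map.empty"
  proof (rule has_3col_extension_cycle_free[OF G \<open>finite X\<close>])
    show "X \<subseteq> V" using X by blast
    show "cycle_free V E X"
      using \<open>finite X\<close> by (rule cycle_free_if_card_less_girth) (use X assms(2) in simp)
    fix Z :: "'a set" assume "Z \<subseteq> X" and "card Z \<le> 3 * card (dom (Map.empty :: 'a \<Rightarrow> nat option))"
    then have "Z = {}" using \<open>finite X\<close> finite_subset by fastforce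
    then show "has_3col_extension E Z Map.empty" unfolding has_3col_extension_def by simp
  qed simp
qed simp_all

lemma safe_position_not_spoiler_wins:
  assumes G: "graph V E" and girth: "7 * k < girth V E"
  shows "safe_position V E k h \<Longrightarrow> \<not> spoiler_wins V E k r h"
proof (induction r arbitrary: h)
  case 0
  then show ?case by simp
next
  case (Suc r)
  show ?case
  proof
    assume "spoiler_wins V E k (Suc r) h"
    then obtain S v where "v \<in> V" and card: "card (insert v (dom h - S)) \<le> k"
      and wins: "\<forall>c\<in>{0,1,2}. \<not> proper_partial E ((h |` (- S))(v \<mapsto> c))
        \<or> spoiler_wins V E k r ((h |` (- S))(v \<mapsto> c))"
      by auto
    have "safe_position V E k (h |` (- S))" using safe_position_restrict[OF G Suc.prems] .
    moreover have "dom (h |` (- S)) = dom h - S" by auto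
    ultimately obtain c where "c \<in> {0,1,2}" and safe: "safe_position V E k ((h |` (- S))(v \<mapsto> c))"
      using safe_position_upd[OF G _ \<open>v \<in> V\<close> _ girth] card by metis
    then show False using wins safe_position_proper Suc.IH by blast
  qed
qed

subsection \<open>Spoiler's strategy\<close>

lemma spoiler_wins_SucI:
  assumes "v \<in> V" and "card (insert v (dom p)) \<le> k"
    and "\<And>c. c \<in> {0,1,2} \<Longrightarrow> \<not> proper_partial E (p(v \<mapsto> c)) \<or> spoiler_wins V E k r (p(v \<mapsto> c))"
  shows "spoiler_wins V E k (Suc r) p"
proof -
  have restrict: "p |` (- {}) = p" by (simp add: restrict_map_def)
  show ?thesis unfolding spoiler_wins.simps
  proof (intro exI[of _ "{}"] exI[of _ v] conjI ballI)
    show "{} \<subseteq> dom p" "v \<in> V" "card (insert v (dom p - {})) \<le> k" using assms(1,2) by simp_all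
    fix c :: nat assume "c \<in> {0,1,2}"
    then show "\<not> proper_partial E ((p |` (- {}))(v \<mapsto> c))
        \<or> spoiler_wins V E k r ((p |` (- {}))(v \<mapsto> c))"
      unfolding restrict by (rule assms(3))
  qed
qed

text \<open>With width |V| Spoiler never erases: he selects the uncoloured vertices one at a time, and
  the extra final round recolours a vertex of the then complete colouring, which cannot be proper.\<close>
lemma spoiler_wins_width_card:
  assumes G: "graph V E" and chi: "3 < chromatic_number V E"
  shows "dom p \<subseteq> V \<Longrightarrow> ran p \<subseteq> {..<3} \<Longrightarrow> spoiler_wins V E (card V) (Suc (card (V - dom p))) p"
proof (induction "card (V - dom p)" arbitrary: p)
  case 0
  then have dom: "dom p = V" using graphD(1)[OF G] by auto
  have "V \<noteq> {}" using chi chromatic_number_le[of "{}" _ 0 E] by auto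
  then obtain v where "v \<in> V" by blast
  show ?case unfolding 0(1)[symmetric]
  proof (rule spoiler_wins_SucI[OF \<open>v \<in> V\<close>])
    show "card (insert v (dom p)) \<le> card V" using dom \<open>v \<in> V\<close> by (simp add: insert_absorb)
    fix c :: nat assume "c \<in> {0,1,2}"
    then have "ran (p(v \<mapsto> c)) \<subseteq> {..<3}" using 0 by (auto simp: ran_def)
    moreover have "dom (p(v \<mapsto> c)) = V" using dom \<open>v \<in> V\<close> by auto
    ultimately have "\<not> proper_partial E (p(v \<mapsto> c))"
      using chromatic_number_le_if_proper_partial[of E "p(v \<mapsto> c)" V 3] chi by linarith
    then show "\<not> proper_partial E (p(v \<mapsto> c)) \<or> spoiler_wins V E (card V) 0 (p(v \<mapsto> c))" by blast
  qed
next
  case (Suc n)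
  then obtain v where "v \<in> V" "v \<notin> dom p" by (metis Diff_iff card.empty ex_in_conv nat.simps(3))
  show ?case unfolding Suc.hyps(2)[symmetric]
  proof (rule spoiler_wins_SucI[OF \<open>v \<in> V\<close>])
    show "card (insert v (dom p)) \<le> card V"
      using Suc.prems(1) \<open>v \<in> V\<close> graphD(1)[OF G] by (simp add: card_mono)
    fix c :: nat assume "c \<in> {0,1,2}"
    have "V - dom (p(v \<mapsto> c)) = (V - dom p) - {v}" by auto
    then have n: "n = card (V - dom (p(v \<mapsto> c)))"
      using Suc.hyps(2) \<open>v \<in> V\<close> \<open>v \<notin> dom p\<close> graphD(1)[OF G] by simp
    have "spoiler_wins V E (card V) (Suc (card (V - dom (p(v \<mapsto> c))))) (p(v \<mapsto> c))"
    proof (rule Suc.hyps(1)[OF n])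
      show "dom (p(v \<mapsto> c)) \<subseteq> V" using Suc.prems(1) \<open>v \<in> V\<close> by simp
      show "ran (p(v \<mapsto> c)) \<subseteq> {..<3}"
        using Suc.prems(2) \<open>v \<notin> dom p\<close> \<open>c \<in> {0,1,2}\<close> by (auto simp: domIff)
    qed
    from this[folded n] show "\<not> proper_partial E (p(v \<mapsto> c)) \<or> spoiler_wins V E (card V) (Suc n) (p(v \<mapsto> c))"
      by blast
  qed
qed

lemma spoiler_wins_W:
  assumes "graph V E" and "3 < chromatic_number V E"
  shows "\<exists>r. spoiler_wins V E (W V E) r Map.empty"
proof -
  have "spoiler_wins V E (card V) (Suc (card (V - dom (Map.empty :: 'a \<Rightarrow> nat option)))) Map.empty"
    by (rule spoiler_wins_width_card[OF assms]) simp_all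
  then have "\<exists>k r. spoiler_wins V E k r Map.empty" by blast
  then show ?thesis unfolding W_def by (rule LeastI_ex)
qed

lemma spoiler_wins_empty_width_pos: "spoiler_wins V E k r Map.empty \<Longrightarrow> 0 < k"
  by (cases r) auto

lemma girth_le_7_W:
  assumes G: "graph V E" and chi: "3 < chromatic_number V E"
  shows "girth V E \<le> 7 * W V E"
proof (rule ccontr)
  assume "\<not> ?thesis"
  then have "7 * W V E < girth V E" by simp
  moreover from this have "safe_position V E (W V E) Map.empty"
    by (intro safe_position_empty[OF G]) linarith
  ultimately show False
    using safe_position_not_spoiler_wins[OF G] spoiler_wins_W[OF G chi] by blast
qed

theorem theorem4:
  fixes V :: "'a set" and E :: "'a \<Rightarrow> 'a \<Rightarrow> bool"
  assumes "graph V E" and "chromatic_number V E > 3"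
  shows "real (W V E) > real (girth V E) / 16"
proof -
  obtain r where "spoiler_wins V E (W V E) r Map.empty" using spoiler_wins_W[OF assms] by blast
  then have "0 < W V E" by (rule spoiler_wins_empty_width_pos)
  moreover have "real (girth V E) \<le> 7 * real (W V E)" using girth_le_7_W[OF assms] by simp
  ultimately show ?thesis by simp
qed

end
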